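(* Let $d\in\{1,2\}$, let $K$ be any simplicial complex on $[m]$, let $H_d$ be any closed subgroup of $G_d^m$ and let $L_d=G_d^m/H_d$. Then there is an $L_d$-equivariant homotopy equivalence \[ (D^d,S^{d-1})^{K}/H_d\simeq \operatorname{hocolim}_{I\in\mathrm{cat}(K)}\ G_d^m/( G_d^I\cdot H_d), \] where $L_d$ acts on $(D^d,S^{d-1})^K/H_d$ via the $G_d^m$-action, on each $G_d^m/(G_d^I\cdot H_d)$ by left translation, and the homotopy colimit is formed in the category of $L_d$-spaces (it is an $L_d$-CW-complex with cells $\Delta^s\times G_d^m/(G_d^{I_s}\cdot H_d)$ indexed by chains $I_0\supset\dots\supset I_s$ in $\mathrm{cat}(K)$).
   Context: Let $d\in\{1,2\}$; $G_1=\{\pm1\}\cong\mathbb Z/2\mathbb Z\subset\mathbb R$, $G_2=S^1\subset\mathbb C$; $D^d$ the closed unit disk in $\mathbb R$ (resp. $\mathbb C$), $S^{d-1}=\partial D^d$. $K$ is a simplicial complex on $[m]$, $\mathrm{cat}(K)$ the poset of faces of $K$ together with $\varnothing$, ordered by inclusion. $G_d^I\subseteq G_d^m$ is the coordinate subgroup with coordinates outside $I$ equal to $1$. $(D^d,S^{d-1})^I=\prod_{i\in I}D^d\times\prod_{j\notin I}S^{d-1}$ and $(D^d,S^{d-1})^K=\bigcup_{I\in K}(D^d,S^{d-1})^I\subseteq(D^d)^m$ with coordinatewise $G_d^m$-action. $G_d^I\cdot H_d$ is the subgroup generated by $G_d^I$ and $H_d$; the diagram maps are the natural projections. *)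

theory Defs
  imports "HOL-Analysis.Analysis"
begin

definition quotient_top :: "'a topology \<Rightarrow> ('a \<Rightarrow> 'b) \<Rightarrow> 'b topology" where
  "quotient_top X q = topology (\<lambda>U. U \<subseteq> q ` topspace X \<and> openin X {x \<in> topspace X. q x \<in> U})"

definition equivariant ::
  "'l set \<Rightarrow> ('l \<Rightarrow> 'a \<Rightarrow> 'a) \<Rightarrow> ('l \<Rightarrow> 'b \<Rightarrow> 'b) \<Rightarrow> 'a topology \<Rightarrow> ('a \<Rightarrow> 'b) \<Rightarrow> bool" where
  "equivariant L actX actY X f \<longleftrightarrow> (\<forall>l\<in>L. \<forall>x\<in>topspace X. f (actX l x) = actY l (f x))"

definition equivariant_homotopy_equivalent ::
  "'l set \<Rightarrow> 'a topology \<Rightarrow> ('l \<Rightarrow> 'a \<Rightarrow> 'a) \<Rightarrow> 'b topology \<Rightarrow> ('l \<Rightarrow> 'b \<Rightarrow> 'b) \<Rightarrow> bool" where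
  "equivariant_homotopy_equivalent L X actX Y actY \<longleftrightarrow>
     (\<exists>f g. continuous_map X Y f \<and> continuous_map Y X g \<and>
        equivariant L actX actY X f \<and> equivariant L actY actX Y g \<and>
        homotopic_with (equivariant L actX actX X) X X (g \<circ> f) id \<and>
        homotopic_with (equivariant L actY actY Y) Y Y (f \<circ> g) id)"

definition Disk :: "nat \<Rightarrow> complex set" where
  "Disk d = {z. cmod z \<le> 1 \<and> (d = 1 \<longrightarrow> Im z = 0)}"

definition Sph :: "nat \<Rightarrow> complex set" where
  "Sph d = {z. cmod z = 1 \<and> (d = 1 \<longrightarrow> Im z = 0)}"

text \<open>G_d = S^{d-1}: {+-1} for d = 1, S^1 for d = 2. Coordinates are indexed by [m] = {0..<m}.\<close>
definition Gm :: "nat \<Rightarrow> nat \<Rightarrow> (nat \<Rightarrow> complex) set" where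
  "Gm d m = PiE {..<m} (\<lambda>_. Sph d)"

definition gmul :: "nat \<Rightarrow> (nat \<Rightarrow> complex) \<Rightarrow> (nat \<Rightarrow> complex) \<Rightarrow> (nat \<Rightarrow> complex)" where
  "gmul m g x = (\<lambda>i\<in>{..<m}. g i * x i)"

definition gone :: "nat \<Rightarrow> nat \<Rightarrow> complex" where
  "gone m = (\<lambda>i\<in>{..<m}. 1)"

definition ginv :: "nat \<Rightarrow> (nat \<Rightarrow> complex) \<Rightarrow> (nat \<Rightarrow> complex)" where
  "ginv m g = (\<lambda>i\<in>{..<m}. inverse (g i))"

definition setmul :: "nat \<Rightarrow> (nat \<Rightarrow> complex) set \<Rightarrow> (nat \<Rightarrow> complex) set \<Rightarrow> (nat \<Rightarrow> complex) set" where
  "setmul m A B = {gmul m a b | a b. a \<in> A \<and> b \<in> B}"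

definition cube_top :: "nat \<Rightarrow> (nat \<Rightarrow> complex) topology" where
  "cube_top m = product_topology (\<lambda>_. euclidean) {..<m}"

definition is_subgroup :: "nat \<Rightarrow> nat \<Rightarrow> (nat \<Rightarrow> complex) set \<Rightarrow> bool" where
  "is_subgroup d m H \<longleftrightarrow> H \<subseteq> Gm d m \<and> gone m \<in> H \<and>
     (\<forall>g\<in>H. \<forall>h\<in>H. gmul m g h \<in> H) \<and> (\<forall>g\<in>H. ginv m g \<in> H)"

definition closed_subgroup :: "nat \<Rightarrow> nat \<Rightarrow> (nat \<Rightarrow> complex) set \<Rightarrow> bool" where
  "closed_subgroup d m H \<longleftrightarrow> is_subgroup d m H \<and> closedin (cube_top m) H"

definition GI :: "nat \<Rightarrow> nat \<Rightarrow> nat set \<Rightarrow> (nat \<Rightarrow> complex) set" where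
  "GI d m I = {g \<in> Gm d m. \<forall>j\<in>{..<m} - I. g j = 1}"

definition gen_subgroup :: "nat \<Rightarrow> nat \<Rightarrow> (nat \<Rightarrow> complex) set \<Rightarrow> (nat \<Rightarrow> complex) set \<Rightarrow> (nat \<Rightarrow> complex) set" where
  "gen_subgroup d m A B = \<Inter> {N. is_subgroup d m N \<and> A \<subseteq> N \<and> B \<subseteq> N}"

definition cosets :: "nat \<Rightarrow> nat \<Rightarrow> (nat \<Rightarrow> complex) set \<Rightarrow> (nat \<Rightarrow> complex) set set" where
  "cosets d m N = (\<lambda>g. setmul m {g} N) ` Gm d m"

definition coset_top :: "nat \<Rightarrow> nat \<Rightarrow> (nat \<Rightarrow> complex) set \<Rightarrow> (nat \<Rightarrow> complex) set topology" where
  "coset_top d m N = quotient_top (subtopology (cube_top m) (Gm d m)) (\<lambda>g. setmul m {g} N)"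

text \<open>Action of L = G/H (cosets) on sets of points: set product.\<close>
definition Lact :: "nat \<Rightarrow> (nat \<Rightarrow> complex) set \<Rightarrow> (nat \<Rightarrow> complex) set \<Rightarrow> (nat \<Rightarrow> complex) set" where
  "Lact m l C = setmul m l C"

definition simp_complex_on :: "nat \<Rightarrow> nat set set \<Rightarrow> bool" where
  "simp_complex_on m K \<longleftrightarrow> K \<subseteq> Pow {..<m} \<and> {} \<in> K \<and> (\<forall>\<sigma>\<in>K. \<forall>\<tau>. \<tau> \<subseteq> \<sigma> \<longrightarrow> \<tau> \<in> K)"

definition polyhedral_product :: "nat \<Rightarrow> nat \<Rightarrow> nat set set \<Rightarrow> (nat \<Rightarrow> complex) set" where
  "polyhedral_product d m K =
     (\<Union>I\<in>K. {x \<in> PiE {..<m} (\<lambda>_. Disk d). \<forall>j\<in>{..<m} - I. x j \<in> Sph d})"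

definition orbit_space :: "nat \<Rightarrow> nat \<Rightarrow> nat set set \<Rightarrow> (nat \<Rightarrow> complex) set \<Rightarrow> (nat \<Rightarrow> complex) set topology" where
  "orbit_space d m K H = quotient_top (subtopology (cube_top m) (polyhedral_product d m K)) (\<lambda>x. setmul m H {x})"

definition chains :: "nat set set \<Rightarrow> nat set set set" where
  "chains K = {\<sigma>. \<sigma> \<noteq> {} \<and> \<sigma> \<subseteq> K \<and> (\<forall>I\<in>\<sigma>. \<forall>J\<in>\<sigma>. I \<subseteq> J \<or> J \<subseteq> I)}"

text \<open>Geometric simplex spanned by a chain (barycentric coordinates, zero outside the chain).\<close>
definition simplex_on :: "nat set set \<Rightarrow> (nat set \<Rightarrow> real) set" where
  "simplex_on \<sigma> = {t. (\<forall>I. 0 \<le> t I) \<and> (\<forall>I. I \<notin> \<sigma> \<longrightarrow> t I = 0) \<and> sum t \<sigma> = 1}"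

definition simplex_top :: "nat set set \<Rightarrow> (nat set \<Rightarrow> real) topology" where
  "simplex_top \<sigma> = subtopology (product_topology (\<lambda>_. euclideanreal) UNIV) (simplex_on \<sigma>)"

definition NI :: "nat \<Rightarrow> nat \<Rightarrow> (nat \<Rightarrow> complex) set \<Rightarrow> nat set \<Rightarrow> (nat \<Rightarrow> complex) set" where
  "NI d m H I = gen_subgroup d m (GI d m I) H"

text \<open>Cell for a chain sigma: Delta^sigma x G/(G^{min sigma} H); min sigma = intersection.\<close>
definition hocolim_cells :: "nat \<Rightarrow> nat \<Rightarrow> nat set set \<Rightarrow> (nat \<Rightarrow> complex) set
    \<Rightarrow> (nat set set \<times> ((nat set \<Rightarrow> real) \<times> (nat \<Rightarrow> complex) set)) topology" where
  "hocolim_cells d m K H =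
     sum_topology (\<lambda>\<sigma>. prod_topology (simplex_top \<sigma>) (coset_top d m (NI d m H (\<Inter>\<sigma>)))) (chains K)"

text \<open>Face identifications: a point (t, C) of the cell of sigma is identified with
  (t, image of C in G/(G^J H)), J the minimal face of the support of t.\<close>
definition hocolim_proj :: "nat \<Rightarrow> nat \<Rightarrow> (nat \<Rightarrow> complex) set
    \<Rightarrow> nat set set \<times> ((nat set \<Rightarrow> real) \<times> (nat \<Rightarrow> complex) set)
    \<Rightarrow> (nat set \<Rightarrow> real) \<times> (nat \<Rightarrow> complex) set" where
  "hocolim_proj d m H p =
     (case p of (\<sigma>, t, C) \<Rightarrow> (t, setmul m C (NI d m H (\<Inter>{I\<in>\<sigma>. t I \<noteq> 0}))))"

definition hocolim :: "nat \<Rightarrow> nat \<Rightarrow> nat set set \<Rightarrow> (nat \<Rightarrow> complex) set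
    \<Rightarrow> ((nat set \<Rightarrow> real) \<times> (nat \<Rightarrow> complex) set) topology" where
  "hocolim d m K H = quotient_top (hocolim_cells d m K H) (hocolim_proj d m H)"

definition hocolim_act :: "nat \<Rightarrow> (nat \<Rightarrow> complex) set
    \<Rightarrow> (nat set \<Rightarrow> real) \<times> (nat \<Rightarrow> complex) set \<Rightarrow> (nat set \<Rightarrow> real) \<times> (nat \<Rightarrow> complex) set" where
  "hocolim_act m l p = (fst p, Lact m l (snd p))"

end

theory Submission
  imports Defs
begin

text \<open>The equivalence is an equivariant homeomorphism. A point of the cell of a chain
  \<open>\<sigma>\<close> of faces is a pair \<open>(t, c N)\<close> of barycentric weights \<open>t\<close> and a coset of
  \<open>N = G\<^sup>I H\<close>, where \<open>I\<close> is the smallest face of \<open>\<sigma>\<close> carrying weight. It is sent to the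
  \<open>H\<close>-orbit of the point with phases \<open>c\<close> and radii \<open>r\<^sub>i = \<Sum>{t J | i \<notin> J}\<close>; these radii
  vanish exactly on \<open>I\<close>, which is why the coset of \<open>c\<close> determines the orbit. Conversely a radius
  vector with \<open>{r < 1} \<in> K\<close> comes from a unique point of a simplex: the level sets
  \<open>{r < v}\<close> form the chain and the weights are the gaps between consecutive levels. So the map is
  a continuous equivariant bijection; as the homotopy colimit is compact and the orbit space of the
  compact group \<open>H\<close> is Hausdorff, it is a homeomorphism.\<close>

lemma istopology_quotient_top:
  "istopology (\<lambda>U. U \<subseteq> q ` topspace X \<and> openin X {x \<in> topspace X. q x \<in> U})"
proof -
  have Int: "{x \<in> topspace X. q x \<in> S \<inter> T} = {x \<in> topspace X. q x \<in> S} \<inter> {x \<in> topspace X. q x \<in> T}"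
    for S T by auto
  have Union: "{x \<in> topspace X. q x \<in> \<Union>\<U>} = (\<Union>U\<in>\<U>. {x \<in> topspace X. q x \<in> U})" for \<U>
    by auto
  show ?thesis
    unfolding istopology_def by (auto simp only: Int Union intro!: openin_Int openin_Union)
qed

lemma openin_quotient_top:
  "openin (quotient_top X q) U \<longleftrightarrow> U \<subseteq> q ` topspace X \<and> openin X {x \<in> topspace X. q x \<in> U}"
  unfolding quotient_top_def by (simp add: topology_inverse'[OF istopology_quotient_top])

lemma topspace_quotient_top [simp]: "topspace (quotient_top X q) = q ` topspace X"
proof -
  have "{x \<in> topspace X. q x \<in> q ` topspace X} = topspace X"
    by auto
  then have "openin (quotient_top X q) (q ` topspace X)"
    by (simp add: openin_quotient_top)
  then show ?thesis
    by (metis openin_subset openin_topspace subset_antisym openin_quotient_top)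
qed

lemma quotient_map_quotient_top: "quotient_map X (quotient_top X q) q"
  unfolding quotient_map_def by (auto simp: openin_quotient_top)

lemma continuous_map_quotient_top: "continuous_map X (quotient_top X q) q"
  using quotient_map_quotient_top quotient_imp_continuous_map by blast

lemma continuous_map_from_quotient_top:
  "continuous_map X Y (f \<circ> q) \<Longrightarrow> continuous_map (quotient_top X q) Y f"
  using continuous_compose_quotient_map[OF quotient_map_quotient_top] .

lemma compact_space_quotient_top: "compact_space X \<Longrightarrow> compact_space (quotient_top X q)"
  using image_compactin[OF _ continuous_map_quotient_top, of X "topspace X" q]
  by (simp add: compact_space_def)

lemma continuous_map_from_sum_topology:
  assumes "\<And>i. i \<in> I \<Longrightarrow> continuous_map (X i) Y (\<lambda>x. f (i, x))"
  shows "continuous_map (sum_topology X I) Y f"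
  unfolding continuous_map_def
proof (intro conjI allI impI)
  show "f \<in> topspace (sum_topology X I) \<rightarrow> topspace Y"
    using assms by (auto simp: continuous_map_def Pi_iff)
next
  fix U assume U: "openin Y U"
  show "openin (sum_topology X I) {x \<in> topspace (sum_topology X I). f x \<in> U}"
    unfolding openin_sum_topology
  proof (intro conjI ballI)
    fix i assume i: "i \<in> I"
    have "{x. (i, x) \<in> {x \<in> topspace (sum_topology X I). f x \<in> U}} = {x \<in> topspace (X i). f (i, x) \<in> U}"
      using i by auto
    then show "openin (X i) {x. (i, x) \<in> {x \<in> topspace (sum_topology X I). f x \<in> U}}"
      using assms[OF i] U by (simp add: continuous_map_def)
  qed auto
qed

lemma compact_space_sum_topology:
  assumes "finite I" "\<And>i. i \<in> I \<Longrightarrow> compact_space (X i)"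
  shows "compact_space (sum_topology X I)"
proof -
  have "topspace (sum_topology X I) = (\<Union>i\<in>I. (\<lambda>x. (i, x)) ` topspace (X i))"
    by auto
  moreover have "compactin (sum_topology X I) ((\<lambda>x. (i, x)) ` topspace (X i))" if "i \<in> I" for i
    using image_compactin continuous_map_component_injection[OF that] assms(2)[OF that]
    by (metis compact_space_def)
  ultimately show ?thesis
    unfolding compact_space_def using assms(1) by (auto intro!: compactin_Union)
qed

lemma equivariant_homotopy_equivalent_if_homeomorphic_map:
  assumes f: "homeomorphic_map Y X f" and eq: "equivariant L actY actX Y f"
    and actX: "\<And>l x. l \<in> L \<Longrightarrow> x \<in> topspace X \<Longrightarrow> actX l x \<in> topspace X"
    and actY: "\<And>l y. l \<in> L \<Longrightarrow> y \<in> topspace Y \<Longrightarrow> actY l y \<in> topspace Y"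
  shows "equivariant_homotopy_equivalent L X actX Y actY"
proof -
  obtain g where fg: "homeomorphic_maps Y X f g"
    using f homeomorphic_map_maps by blast
  then have cf: "continuous_map Y X f" and cg: "continuous_map X Y g"
    and gf: "\<And>y. y \<in> topspace Y \<Longrightarrow> g (f y) = y"
    and fg': "\<And>x. x \<in> topspace X \<Longrightarrow> f (g x) = x"
    by (auto simp: homeomorphic_maps_def)
  have g_in: "g x \<in> topspace Y" if "x \<in> topspace X" for x
    using cg that by (auto simp: continuous_map_def)
  have "equivariant L actX actY X g"
    unfolding equivariant_def
  proof (intro ballI)
    fix l x assume l: "l \<in> L" and x: "x \<in> topspace X"
    have "f (g (actX l x)) = f (actY l (g x))"
      using eq l x g_in actX fg' unfolding equivariant_def by simp
    then show "g (actX l x) = actY l (g x)"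
      by (metis actX actY g_in gf l x)
  qed
  moreover have "homotopic_with (equivariant L actX actX X) X X (f \<circ> g) id"
    by (rule homotopic_with_equal)
      (use continuous_map_compose[OF cg cf] fg' actX in \<open>auto simp: equivariant_def\<close>)
  moreover have "homotopic_with (equivariant L actY actY Y) Y Y (g \<circ> f) id"
    by (rule homotopic_with_equal)
      (use continuous_map_compose[OF cf cg] gf actY in \<open>auto simp: equivariant_def\<close>)
  ultimately show ?thesis
    unfolding equivariant_homotopy_equivalent_def using cf cg eq by blast
qed

lemma gmul_apply: "gmul m a b i = (if i < m then a i * b i else undefined)"
  by (simp add: gmul_def)

lemma gmul_extensional [simp]: "gmul m a b \<in> extensional {..<m}"
  by (simp add: gmul_def)

lemma gmul_assoc: "gmul m (gmul m a b) c = gmul m a (gmul m b c)"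
  by (auto simp: fun_eq_iff gmul_apply mult.assoc)

lemma gmul_commute: "gmul m a b = gmul m b a"
  by (auto simp: fun_eq_iff gmul_apply mult.commute)

lemma gone_extensional [simp]: "gone m \<in> extensional {..<m}"
  by (simp add: gone_def)

lemma gmul_gone_left: "x \<in> extensional {..<m} \<Longrightarrow> gmul m (gone m) x = x"
  by (auto simp: fun_eq_iff gmul_apply gone_def extensional_def)

lemma one_in_Sph [simp]: "1 \<in> Sph d"
  by (simp add: Sph_def)

lemma Sph_mult: "a \<in> Sph d \<Longrightarrow> b \<in> Sph d \<Longrightarrow> a * b \<in> Sph d"
  by (auto simp: Sph_def norm_mult)

lemma Sph_inverse: "a \<in> Sph d \<Longrightarrow> inverse a \<in> Sph d"
  by (auto simp: Sph_def norm_inverse)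

lemma Sph_nonzero: "a \<in> Sph d \<Longrightarrow> a \<noteq> 0"
  by (auto simp: Sph_def)

lemma Gm_iff: "g \<in> Gm d m \<longleftrightarrow> g \<in> extensional {..<m} \<and> (\<forall>i<m. g i \<in> Sph d)"
  by (auto simp: Gm_def PiE_def Pi_def)

lemma gmul_in_Gm: "a \<in> Gm d m \<Longrightarrow> b \<in> Gm d m \<Longrightarrow> gmul m a b \<in> Gm d m"
  by (auto simp: Gm_iff gmul_apply intro: Sph_mult)

lemma ginv_in_Gm: "a \<in> Gm d m \<Longrightarrow> ginv m a \<in> Gm d m"
  by (auto simp: Gm_iff ginv_def intro: Sph_inverse)

lemma gmul_ginv_cancel_left:
  "a \<in> Gm d m \<Longrightarrow> x \<in> extensional {..<m} \<Longrightarrow> gmul m a (gmul m (ginv m a) x) = x"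
  by (auto simp: fun_eq_iff gmul_apply ginv_def Gm_iff Sph_nonzero extensional_def)

lemma ginv_gmul_cancel_left:
  "a \<in> Gm d m \<Longrightarrow> x \<in> extensional {..<m} \<Longrightarrow> gmul m (ginv m a) (gmul m a x) = x"
  by (auto simp: fun_eq_iff gmul_apply ginv_def Gm_iff Sph_nonzero extensional_def)

lemma is_subgroupD:
  assumes "is_subgroup d m N"
  shows "N \<subseteq> Gm d m" "gone m \<in> N" "g \<in> N \<Longrightarrow> h \<in> N \<Longrightarrow> gmul m g h \<in> N"
    "g \<in> N \<Longrightarrow> ginv m g \<in> N"
  using assms by (auto simp: is_subgroup_def)

lemma setmul_iff: "z \<in> setmul m A B \<longleftrightarrow> (\<exists>a\<in>A. \<exists>b\<in>B. z = gmul m a b)"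
  by (auto simp: setmul_def)

lemma setmulI: "a \<in> A \<Longrightarrow> b \<in> B \<Longrightarrow> gmul m a b \<in> setmul m A B"
  by (auto simp: setmul_def)

lemma setmul_singletons [simp]: "setmul m {a} {b} = {gmul m a b}"
  by (auto simp: setmul_def)

lemma setmul_commute: "setmul m A B = setmul m B A"
  by (auto simp: setmul_iff) (use gmul_commute in blast)+

lemma setmul_assoc: "setmul m (setmul m A B) C = setmul m A (setmul m B C)"
proof (intro set_eqI iffI)
  fix z assume "z \<in> setmul m (setmul m A B) C"
  then obtain a b c where "a \<in> A" "b \<in> B" "c \<in> C" "z = gmul m a (gmul m b c)"
    by (auto simp: setmul_iff gmul_assoc)
  then show "z \<in> setmul m A (setmul m B C)"
    by (simp add: setmulI)
next
  fix z assume "z \<in> setmul m A (setmul m B C)"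
  then obtain a b c where "a \<in> A" "b \<in> B" "c \<in> C" "z = gmul m (gmul m a b) c"
    by (auto simp: setmul_iff gmul_assoc)
  then show "z \<in> setmul m (setmul m A B) C"
    by (simp add: setmulI)
qed

lemma setmul_mono: "A \<subseteq> A' \<Longrightarrow> B \<subseteq> B' \<Longrightarrow> setmul m A B \<subseteq> setmul m A' B'"
  by (auto simp: setmul_def)

lemma setmul_subgroup_absorb:
  assumes N: "is_subgroup d m N" and A: "A \<subseteq> N" "A \<noteq> {}"
  shows "setmul m A N = N"
proof
  show "setmul m A N \<subseteq> N"
    using A(1) by (auto simp: setmul_iff intro!: is_subgroupD(3)[OF N])
  obtain a where a: "a \<in> A"
    using A(2) by blast
  have aG: "a \<in> Gm d m"
    using a A(1) is_subgroupD(1)[OF N] by blast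
  show "N \<subseteq> setmul m A N"
  proof
    fix n assume n: "n \<in> N"
    have "n = gmul m a (gmul m (ginv m a) n)"
      using n is_subgroupD(1)[OF N] by (simp add: gmul_ginv_cancel_left[OF aG] Gm_iff subset_iff)
    moreover have "gmul m (ginv m a) n \<in> N"
      using a A(1) n is_subgroupD(3,4)[OF N] by blast
    ultimately show "n \<in> setmul m A N"
      using a by (auto simp: setmul_iff)
  qed
qed

lemma setmul_is_subgroup:
  assumes A: "is_subgroup d m A" and B: "is_subgroup d m B"
  shows "is_subgroup d m (setmul m A B)"
  unfolding is_subgroup_def
proof (intro conjI ballI)
  show "setmul m A B \<subseteq> Gm d m"
    using is_subgroupD(1)[OF A] is_subgroupD(1)[OF B] by (auto simp: setmul_iff intro!: gmul_in_Gm)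
  have "gone m = gmul m (gone m) (gone m)"
    by (simp add: gmul_gone_left)
  then show "gone m \<in> setmul m A B"
    using is_subgroupD(2)[OF A] is_subgroupD(2)[OF B] unfolding setmul_iff by blast
next
  fix g h assume "g \<in> setmul m A B" "h \<in> setmul m A B"
  then obtain a1 b1 a2 b2 where ab: "a1 \<in> A" "b1 \<in> B" "a2 \<in> A" "b2 \<in> B"
    "g = gmul m a1 b1" "h = gmul m a2 b2"
    unfolding setmul_iff by blast
  have "gmul m g h = gmul m (gmul m a1 a2) (gmul m b1 b2)"
    using ab by (auto simp: fun_eq_iff gmul_apply ac_simps)
  then show "gmul m g h \<in> setmul m A B"
    using ab is_subgroupD(3)[OF A] is_subgroupD(3)[OF B] unfolding setmul_iff by blast
next
  fix g assume "g \<in> setmul m A B"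
  then obtain a b where ab: "a \<in> A" "b \<in> B" "g = gmul m a b"
    unfolding setmul_iff by blast
  have "ginv m g = gmul m (ginv m a) (ginv m b)"
    using ab by (auto simp: fun_eq_iff gmul_apply ginv_def)
  then show "ginv m g \<in> setmul m A B"
    using ab is_subgroupD(4)[OF A] is_subgroupD(4)[OF B] unfolding setmul_iff by blast
qed

lemma gen_subgroup_eq_setmul:
  assumes A: "is_subgroup d m A" and B: "is_subgroup d m B"
  shows "gen_subgroup d m A B = setmul m A B"
proof
  have "A = setmul m {gone m} A" "B = setmul m {gone m} B"
    using setmul_subgroup_absorb[OF A] setmul_subgroup_absorb[OF B]
      is_subgroupD(2)[OF A] is_subgroupD(2)[OF B] by simp_all
  then have "A \<subseteq> setmul m A B" "B \<subseteq> setmul m A B"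
    using setmul_mono[of "{gone m}" B A A m] setmul_mono[of "{gone m}" A B B m]
      is_subgroupD(2)[OF A] is_subgroupD(2)[OF B] setmul_commute[of m A B] by auto
  then show "gen_subgroup d m A B \<subseteq> setmul m A B"
    unfolding gen_subgroup_def using setmul_is_subgroup[OF A B] by blast
  show "setmul m A B \<subseteq> gen_subgroup d m A B"
    unfolding gen_subgroup_def
    by (auto simp: setmul_iff) (blast intro: is_subgroupD(3))
qed

lemma GI_is_subgroup: "is_subgroup d m (GI d m I)"
  unfolding is_subgroup_def GI_def
  by (auto simp: Gm_iff gmul_apply ginv_def gone_def intro: Sph_mult Sph_inverse)

context
  fixes d m :: nat and H :: "(nat \<Rightarrow> complex) set"
  assumes H: "is_subgroup d m H"
begin

lemma NI_eq_setmul: "NI d m H I = setmul m (GI d m I) H"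
  by (simp add: NI_def gen_subgroup_eq_setmul[OF GI_is_subgroup H])

lemma NI_is_subgroup: "is_subgroup d m (NI d m H I)"
  by (simp add: NI_eq_setmul GI_is_subgroup setmul_is_subgroup H)

lemma subgroup_subset_NI: "H \<subseteq> NI d m H I"
proof -
  have "H = setmul m {gone m} H"
    using setmul_subgroup_absorb[OF H, of "{gone m}"] is_subgroupD(2)[OF H] by simp
  also have "\<dots> \<subseteq> NI d m H I"
    unfolding NI_eq_setmul using is_subgroupD(2)[OF GI_is_subgroup] by (intro setmul_mono) auto
  finally show ?thesis .
qed

lemma NI_mono: "I \<subseteq> J \<Longrightarrow> NI d m H I \<subseteq> NI d m H J"
  unfolding NI_eq_setmul by (rule setmul_mono) (auto simp: GI_def)

end

lemma mem_coset_self: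
  "gone m \<in> N \<Longrightarrow> x \<in> extensional {..<m} \<Longrightarrow> x \<in> setmul m {x} N"
  using setmulI[of x "{x}" "gone m" N m] gmul_gone_left[of x m] gmul_commute[of m x "gone m"]
  by simp

lemma coset_eq_if_mem:
  assumes N: "is_subgroup d m N" and y: "y \<in> setmul m {x} N"
  shows "setmul m {y} N = setmul m {x} N"
proof -
  obtain n where n: "n \<in> N" "y = gmul m x n"
    using y by (auto simp: setmul_iff)
  then have "setmul m {y} N = setmul m {x} (setmul m {n} N)"
    by (simp flip: setmul_assoc)
  also have "\<dots> = setmul m {x} N"
    using setmul_subgroup_absorb[OF N, of "{n}"] n(1) by simp
  finally show ?thesis .
qed

lemma coset_eq_iff:
  assumes "is_subgroup d m N" "y \<in> extensional {..<m}"
  shows "setmul m {y} N = setmul m {x} N \<longleftrightarrow> y \<in> setmul m {x} N"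
  using coset_eq_if_mem[OF assms(1)] mem_coset_self[OF is_subgroupD(2)[OF assms(1)] assms(2)]
  by blast

lemma orbit_eq_iff:
  assumes "is_subgroup d m H" "y \<in> extensional {..<m}"
  shows "setmul m H {y} = setmul m H {x} \<longleftrightarrow> (\<exists>h\<in>H. y = gmul m h x)"
  using coset_eq_iff[OF assms, of x] by (auto simp: setmul_commute[of m H] setmul_iff gmul_commute)

lemma setmul_coset_coset:
  assumes "is_subgroup d m N" "H \<subseteq> N" "H \<noteq> {}"
  shows "setmul m (setmul m {a} H) (setmul m {x} N) = setmul m {gmul m a x} N"
proof -
  have "setmul m (setmul m {a} H) (setmul m {x} N) = setmul m {a} (setmul m {x} (setmul m H N))"
    by (metis setmul_assoc setmul_commute)
  also have "\<dots> = setmul m {gmul m a x} N"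
    by (simp add: setmul_subgroup_absorb[OF assms] flip: setmul_assoc)
  finally show ?thesis .
qed

section \<open>Weights on chains of faces and the radii they induce\<close>

lemma chains_mono: "K \<subseteq> K' \<Longrightarrow> chains K \<subseteq> chains K'"
  by (auto simp: chains_def)

definition radius :: "nat \<Rightarrow> (nat set \<Rightarrow> real) \<Rightarrow> nat \<Rightarrow> real" where
  "radius m t i = (\<Sum>J | J \<subseteq> {..<m} \<and> i \<notin> J. t J)"

abbreviation support_face :: "nat set set \<Rightarrow> (nat set \<Rightarrow> real) \<Rightarrow> nat set" where
  "support_face \<sigma> t \<equiv> \<Inter>{I \<in> \<sigma>. t I \<noteq> 0}"

lemma finite_subsets_lessThan: "finite {J. J \<subseteq> {..<(m::nat)} \<and> P J}"
  by (rule finite_subset[of _ "Pow {..<m}"]) auto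

locale chain_point =
  fixes m :: nat and \<sigma> :: "nat set set" and t :: "nat set \<Rightarrow> real"
  assumes chain: "\<sigma> \<in> chains (Pow {..<m})" and simplex: "t \<in> simplex_on \<sigma>"
begin

lemma chain_subset_Pow: "\<sigma> \<subseteq> Pow {..<m}"
  using chain by (simp add: chains_def)

lemma finite_chain: "finite \<sigma>"
  using chain_subset_Pow by (rule finite_subset) simp

lemma chain_comparable: "I \<in> \<sigma> \<Longrightarrow> J \<in> \<sigma> \<Longrightarrow> I \<subseteq> J \<or> J \<subseteq> I"
  using chain by (simp add: chains_def)

lemma Inter_in_subchain:
  assumes "S \<subseteq> \<sigma>" "S \<noteq> {}"
  shows "\<Inter>S \<in> S"
proof -
  have "subset.chain UNIV S"
    using assms(1) chain_comparable unfolding subset.chain_def by blast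
  then show ?thesis
    using assms finite_subset[OF _ finite_chain] Inter_in_chain by blast
qed

lemma Union_in_subchain:
  assumes "S \<subseteq> \<sigma>" "S \<noteq> {}"
  shows "\<Union>S \<in> S"
proof -
  have "subset.chain UNIV S"
    using assms(1) chain_comparable unfolding subset.chain_def by blast
  then show ?thesis
    using assms finite_subset[OF _ finite_chain] Union_in_chain by blast
qed

lemma weight_nonneg: "0 \<le> t I"
  using simplex by (simp add: simplex_on_def)

lemma weight_outside: "I \<notin> \<sigma> \<Longrightarrow> t I = 0"
  using simplex by (simp add: simplex_on_def)

lemma sum_weight: "sum t \<sigma> = 1"
  using simplex by (simp add: simplex_on_def)

lemma sum_weight_mono: "S \<subseteq> S' \<Longrightarrow> S' \<subseteq> \<sigma> \<Longrightarrow> sum t S \<le> sum t S'"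
  using finite_subset[OF _ finite_chain] by (intro sum_mono2) (auto simp: weight_nonneg)

lemma sum_weight_le_1: "S \<subseteq> \<sigma> \<Longrightarrow> sum t S \<le> 1"
  using sum_weight_mono[of S \<sigma>] sum_weight by simp

lemma radius_eq: "radius m t i = sum t {J \<in> \<sigma>. i \<notin> J}"
proof -
  have "sum t {J \<in> \<sigma>. i \<notin> J} = radius m t i"
    unfolding radius_def
    by (rule sum.mono_neutral_left) (use chain_subset_Pow weight_outside in \<open>auto simp: finite_subsets_lessThan\<close>)
  then show ?thesis ..
qed

lemma radius_nonneg: "0 \<le> radius m t i"
  unfolding radius_eq by (rule sum_nonneg) (simp add: weight_nonneg)

lemma radius_le_1: "radius m t i \<le> 1"
  unfolding radius_eq by (rule sum_weight_le_1) auto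

lemma radius_eq_1: "i \<notin> \<Union>\<sigma> \<Longrightarrow> radius m t i = 1"
proof -
  assume "i \<notin> \<Union>\<sigma>"
  then have "{J \<in> \<sigma>. i \<notin> J} = \<sigma>"
    by blast
  then show ?thesis
    by (simp add: radius_eq sum_weight)
qed

lemma radius_eq_0_iff: "radius m t i = 0 \<longleftrightarrow> i \<in> support_face \<sigma> t"
proof -
  have "radius m t i = 0 \<longleftrightarrow> (\<forall>J \<in> {J \<in> \<sigma>. i \<notin> J}. t J = 0)"
    unfolding radius_eq using finite_chain weight_nonneg by (intro sum_nonneg_eq_0_iff) auto
  then show ?thesis
    by blast
qed

definition weight_upto :: "nat set \<Rightarrow> real" where
  "weight_upto J = sum t {J' \<in> \<sigma>. J' \<subseteq> J}"

definition weight_below :: "nat set \<Rightarrow> real" where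
  "weight_below J = sum t {J' \<in> \<sigma>. J' \<subset> J}"

lemma weight_upto_eq: "weight_upto J = weight_below J + (if J \<in> \<sigma> then t J else 0)"
proof (cases "J \<in> \<sigma>")
  case True
  then have "{J' \<in> \<sigma>. J' \<subseteq> J} = insert J {J' \<in> \<sigma>. J' \<subset> J}"
    by auto
  then show ?thesis
    using True finite_chain by (simp add: weight_upto_def weight_below_def)
next
  case False
  then have "{J' \<in> \<sigma>. J' \<subseteq> J} = {J' \<in> \<sigma>. J' \<subset> J}"
    by auto
  then show ?thesis
    using False by (simp add: weight_upto_def weight_below_def)
qed

lemma radius_le_weight_upto:
  assumes "weight_upto J \<noteq> 1"
  obtains i where "i < m" "i \<notin> J" "radius m t i \<le> weight_upto J"
proof -
  define S where "S = {J' \<in> \<sigma>. \<not> J' \<subseteq> J}"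
  have "S \<noteq> {}"
  proof
    assume "S = {}"
    then have "{J' \<in> \<sigma>. J' \<subseteq> J} = \<sigma>"
      by (auto simp: S_def)
    then show False
      using assms sum_weight by (simp add: weight_upto_def)
  qed
  then have M: "\<Inter>S \<in> S"
    by (intro Inter_in_subchain) (auto simp: S_def)
  then obtain i where i: "i \<in> \<Inter>S" "i \<notin> J"
    by (auto simp: S_def)
  have "{J' \<in> \<sigma>. i \<notin> J'} \<subseteq> {J' \<in> \<sigma>. J' \<subseteq> J}"
    using i(1) unfolding S_def by blast
  then have "radius m t i \<le> weight_upto J"
    unfolding weight_upto_def radius_eq by (rule sum_weight_mono) auto
  moreover have "\<Inter>S \<subseteq> {..<m}"
    using M chain_subset_Pow by (auto simp: S_def)
  ultimately show ?thesis
    using i that by blast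
qed

lemma weight_below_le_radius:
  assumes "weight_below J \<noteq> 0"
  obtains i where "i \<in> J" "weight_below J \<le> radius m t i"
proof -
  define S where "S = {J' \<in> \<sigma>. J' \<subset> J}"
  have "S \<noteq> {}"
    using assms unfolding weight_below_def S_def[symmetric] by auto
  then have "\<Union>S \<in> S"
    by (intro Union_in_subchain) (auto simp: S_def)
  then have "\<Union>S \<subset> J"
    by (simp add: S_def)
  then obtain i where i: "i \<in> J" "i \<notin> \<Union>S"
    by blast
  have "S \<subseteq> {J' \<in> \<sigma>. i \<notin> J'}"
    using i(2) unfolding S_def by blast
  then have "weight_below J \<le> radius m t i"
    unfolding weight_below_def radius_eq S_def[symmetric] by (rule sum_weight_mono) auto
  then show ?thesis
    using i that by blast
qed

lemma Min_radius_outside: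
  assumes "J \<subseteq> {..<m}"
  shows "Min (insert 1 (radius m t ` ({..<m} - J))) = weight_upto J"
proof (rule antisym)
  have "weight_upto J \<le> radius m t i" if "i \<notin> J" for i
    unfolding weight_upto_def radius_eq using that by (intro sum_weight_mono) auto
  moreover have "weight_upto J \<le> 1"
    unfolding weight_upto_def by (rule sum_weight_le_1) auto
  ultimately show "weight_upto J \<le> Min (insert 1 (radius m t ` ({..<m} - J)))"
    by (auto simp: Min_ge_iff)
  show "Min (insert 1 (radius m t ` ({..<m} - J))) \<le> weight_upto J"
  proof (cases "weight_upto J = 1")
    case False
    then obtain i where "i < m" "i \<notin> J" "radius m t i \<le> weight_upto J"
      by (rule radius_le_weight_upto)
    then show ?thesis
      by (auto simp: Min_le_iff)
  qed (simp add: Min_le_iff)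
qed

lemma weight_below_le_Max_radius:
  assumes "J \<subseteq> {..<m}"
  shows "weight_below J \<le> Max (insert 0 (radius m t ` J))"
proof -
  have "finite J"
    using assms finite_subset by blast
  then show ?thesis
    using weight_below_le_radius[of J] by (cases "weight_below J = 0") (auto simp: Max_ge_iff)
qed

lemma Max_radius_inside:
  assumes "J \<in> \<sigma>"
  shows "Max (insert 0 (radius m t ` J)) = weight_below J"
proof (rule antisym)
  have "radius m t i \<le> weight_below J" if "i \<in> J" for i
    unfolding weight_below_def radius_eq
    using that assms chain_comparable by (intro sum_weight_mono) auto
  moreover have "0 \<le> weight_below J"
    unfolding weight_below_def by (rule sum_nonneg) (simp add: weight_nonneg)
  moreover have "finite J"
    using assms chain_subset_Pow finite_subset by blast
  ultimately show "Max (insert 0 (radius m t ` J)) \<le> weight_below J"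
    by (auto simp: Max_le_iff)
  show "weight_below J \<le> Max (insert 0 (radius m t ` J))"
    using assms chain_subset_Pow by (intro weight_below_le_Max_radius) auto
qed

end

text \<open>On a chain, the weight of a face \<open>J\<close> is the gap between the smallest radius outside \<open>J\<close>
  and the largest radius inside \<open>J\<close>; a negative gap means \<open>J\<close> is not in the chain.\<close>
definition weight_of_radius :: "nat \<Rightarrow> (nat \<Rightarrow> real) \<Rightarrow> nat set \<Rightarrow> real" where
  "weight_of_radius m r J =
     (if J \<subseteq> {..<m} then max 0 (Min (insert 1 (r ` ({..<m} - J))) - Max (insert 0 (r ` J))) else 0)"

lemma (in chain_point) weight_of_radius: "weight_of_radius m (radius m t) J = t J"
proof (cases "J \<subseteq> {..<m}")
  case False
  then show ?thesis
    using chain_subset_Pow weight_outside by (auto simp: weight_of_radius_def)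
next
  case J: True
  show ?thesis
  proof (cases "J \<in> \<sigma>")
    case True
    then show ?thesis
      using J Min_radius_outside Max_radius_inside weight_upto_eq[of J] weight_nonneg[of J]
      by (simp add: weight_of_radius_def)
  next
    case False
    then show ?thesis
      using J Min_radius_outside weight_below_le_Max_radius weight_upto_eq[of J] weight_outside
      by (simp add: weight_of_radius_def)
  qed
qed

lemma radius_inj:
  assumes "chain_point m \<sigma> t" "chain_point m \<sigma>' t'" "\<And>i. i < m \<Longrightarrow> radius m t i = radius m t' i"
  shows "t = t'"
proof -
  have "radius m t i = radius m t' i" for i
  proof (cases "i < m")
    case False
    then have "i \<notin> \<Union>\<sigma>" "i \<notin> \<Union>\<sigma>'"
      using chain_point.chain_subset_Pow[OF assms(1)] chain_point.chain_subset_Pow[OF assms(2)] by auto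
    then show ?thesis
      using chain_point.radius_eq_1[OF assms(1)] chain_point.radius_eq_1[OF assms(2)] by simp
  qed (use assms(3) in simp)
  then show ?thesis
    using chain_point.weight_of_radius[OF assms(1)] chain_point.weight_of_radius[OF assms(2)]
    by (metis ext)
qed

lemma sum_gaps_nth:
  fixes vs :: "'a::ab_group_add list"
  shows "(\<Sum>j<Suc p. vs ! j - (if j = 0 then 0 else vs ! (j - 1))) = vs ! p"
proof -
  define f where "f k = (if k = 0 then 0 else vs ! (k - 1))" for k
  have "(\<Sum>j<Suc p. vs ! j - (if j = 0 then 0 else vs ! (j - 1))) = (\<Sum>j<Suc p. f (Suc j) - f j)"
    by (simp add: f_def)
  also have "\<dots> = vs ! p"
    unfolding sum_lessThan_telescope by (simp add: f_def)
  finally show ?thesis .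
qed

lemma sum_over_fibres:
  assumes "finite T" "S \<subseteq> T" "\<And>j k. j \<in> S \<Longrightarrow> k \<in> T \<Longrightarrow> L k = L j \<Longrightarrow> k \<in> S"
  shows "(\<Sum>J\<in>L ` S. sum g {j \<in> T. L j = J}) = sum g S"
proof -
  have "sum g S = (\<Sum>J\<in>L ` S. sum g {j \<in> S. L j = J})"
    using finite_subset[OF assms(2,1)] by (rule sum.image_gen)
  also have "\<dots> = (\<Sum>J\<in>L ` S. sum g {j \<in> T. L j = J})"
  proof (rule sum.cong[OF refl])
    fix J assume "J \<in> L ` S"
    then have "{j \<in> S. L j = J} = {j \<in> T. L j = J}"
      using assms(2,3) by auto
    then show "sum g {j \<in> S. L j = J} = sum g {j \<in> T. L j = J}"
      by simp
  qed
  finally show ?thesis ..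
qed

lemma chain_point_of_sorted_levels:
  fixes vs :: "real list" and r :: "nat \<Rightarrow> real"
  assumes sorted: "sorted_wrt (<) vs" and "vs \<noteq> []" and nonneg: "\<And>v. v \<in> set vs \<Longrightarrow> 0 \<le> v"
    and last: "vs ! (length vs - 1) = 1" and levels: "\<And>i. i < m \<Longrightarrow> r i \<in> set vs"
  defines "L j \<equiv> {i. i < m \<and> r i < vs ! j}"
    and "g j \<equiv> vs ! j - (if j = 0 then 0 else vs ! (j - 1))"
  defines "t J \<equiv> \<Sum>j | j < length vs \<and> L j = J. g j"
  shows "chain_point m (L ` {..<length vs}) t" and "\<And>i. i < m \<Longrightarrow> radius m t i = r i"
proof -
  define n where "n = length vs"
  have n: "0 < n"
    using \<open>vs \<noteq> []\<close> by (simp add: n_def)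
  have less: "vs ! j < vs ! k" if "j < k" "k < n" for j k
    using sorted_wrt_nth_less[OF sorted] that by (simp add: n_def)
  have le_iff: "vs ! j \<le> vs ! k \<longleftrightarrow> j \<le> k" if "j < n" "k < n" for j k
    using less[of j k] less[of k j] that by (cases j k rule: linorder_cases) auto
  have g_nonneg: "0 \<le> g j" if "j < n" for j
    using less[of "j - 1" j] nonneg[of "vs ! j"] that by (auto simp: g_def n_def)
  have telescope: "sum g {..<Suc p} = vs ! p" for p
    unfolding g_def by (rule sum_gaps_nth)
  define \<sigma> where "\<sigma> = L ` {..<n}"
  have sum_t: "sum t (L ` S) = sum g S"
    if "S \<subseteq> {..<n}" "\<And>j k. j \<in> S \<Longrightarrow> k < n \<Longrightarrow> L k = L j \<Longrightarrow> k \<in> S" for S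
    unfolding t_def using that sum_over_fibres[of "{..<n}" S L g] by (simp add: n_def)
  have "\<sigma> \<in> chains (Pow {..<m})"
  proof -
    have "L j \<subseteq> L k \<or> L k \<subseteq> L j" for j k
      by (cases "vs ! j \<le> vs ! k") (auto simp: L_def)
    then show ?thesis
      using n by (auto simp: chains_def \<sigma>_def L_def)
  qed
  moreover have "t \<in> simplex_on \<sigma>"
  proof -
    have "sum t \<sigma> = sum g {..<n}"
      unfolding \<sigma>_def by (rule sum_t) auto
    also have "\<dots> = sum g {..<Suc (n - 1)}"
      using n by simp
    also have "\<dots> = 1"
      using telescope last by (simp only: n_def)
    finally have "sum t \<sigma> = 1" .
    moreover have "t J = 0" if "J \<notin> \<sigma>" for J
    proof -
      have "{j. j < length vs \<and> L j = J} = {}"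
        using that by (auto simp: \<sigma>_def n_def)
      then show ?thesis
        unfolding t_def by (simp only: sum.empty)
    qed
    ultimately show ?thesis
      using g_nonneg by (auto simp: simplex_on_def t_def n_def intro!: sum_nonneg)
  qed
  ultimately show cp: "chain_point m (L ` {..<length vs}) t"
    by unfold_locales (simp_all add: \<sigma>_def n_def)
  fix i assume i: "i < m"
  obtain p where p: "p < n" "vs ! p = r i"
    using levels[OF i] by (auto simp: n_def in_set_conv_nth)
  define S where "S = {j. j < n \<and> i \<notin> L j}"
  have S: "S = {..<Suc p}"
    using le_iff[of _ p] p i by (auto simp: S_def L_def not_less)
  have "{J \<in> \<sigma>. i \<notin> J} = L ` S"
    by (auto simp: \<sigma>_def S_def)
  then have "radius m t i = sum t (L ` S)"
    using chain_point.radius_eq[OF cp] by (simp add: \<sigma>_def n_def)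
  also have "\<dots> = sum g S"
    by (rule sum_t) (auto simp: S_def)
  also have "\<dots> = r i"
    using S telescope[of p] p(2) by simp
  finally show "radius m t i = r i" .
qed

lemma exists_chain_point_radius:
  fixes r :: "nat \<Rightarrow> real"
  assumes r: "\<And>i. i < m \<Longrightarrow> 0 \<le> r i \<and> r i \<le> 1"
  obtains \<sigma> t where "\<sigma> \<in> chains (Pow {i. i < m \<and> r i < 1})" "t \<in> simplex_on \<sigma>"
    "\<And>i. i < m \<Longrightarrow> radius m t i = r i"
proof -
  define V where "V = insert 1 (r ` {..<m})"
  have "finite V"
    by (simp add: V_def)
  then obtain vs where vs: "sorted_wrt (<) vs" "set vs = V"
    using finite_set_strict_sorted by blast
  have V01: "0 \<le> v \<and> v \<le> 1" if "v \<in> V" for v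
    using that r by (auto simp: V_def)
  have ne: "vs \<noteq> []"
    using vs(2) by (auto simp: V_def)
  have last: "vs ! (length vs - 1) = 1"
  proof -
    have "1 \<in> set vs"
      using vs(2) by (simp add: V_def)
    then obtain p where p: "p < length vs" "vs ! p = 1"
      by (auto simp: in_set_conv_nth)
    have "vs ! (length vs - 1) \<le> 1"
      using p(1) vs(2) nth_mem[of "length vs - 1" vs] V01 by simp
    moreover have "length vs - 1 < length vs"
      using p(1) by simp
    ultimately have "\<not> p < length vs - 1"
      using sorted_wrt_nth_less[OF vs(1), of p "length vs - 1"] p by auto
    then have "p = length vs - 1"
      using p(1) by linarith
    then show ?thesis
      using p(2) by simp
  qed
  have nonneg: "\<And>v. v \<in> set vs \<Longrightarrow> 0 \<le> v" and levels: "\<And>i. i < m \<Longrightarrow> r i \<in> set vs"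
    using vs(2) V01 by (auto simp: V_def)
  define L where "L j = {i. i < m \<and> r i < vs ! j}" for j
  define \<sigma> where "\<sigma> = L ` {..<length vs}"
  obtain t where cp: "chain_point m \<sigma> t" and radius: "\<And>i. i < m \<Longrightarrow> radius m t i = r i"
    using chain_point_of_sorted_levels[where m=m and r=r, OF vs(1) ne nonneg last levels] unfolding \<sigma>_def L_def by blast
  have "L j \<subseteq> {i. i < m \<and> r i < 1}" if "j < length vs" for j
    using V01[of "vs ! j"] vs(2) nth_mem[OF that] by (auto simp: L_def)
  then have "\<sigma> \<subseteq> Pow {i. i < m \<and> r i < 1}"
    by (auto simp: \<sigma>_def)
  then have "\<sigma> \<in> chains (Pow {i. i < m \<and> r i < 1})"
    using chain_point.chain[OF cp] by (auto simp: chains_def)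
  then show ?thesis
    using that chain_point.simplex[OF cp] radius by blast
qed

section \<open>Compactness and separation\<close>

lemma continuous_map_mult [continuous_intros]:
  fixes f g :: "'a \<Rightarrow> 'b::real_normed_algebra"
  shows "continuous_map X euclidean f \<Longrightarrow> continuous_map X euclidean g \<Longrightarrow>
    continuous_map X euclidean (\<lambda>x. f x * g x)"
  by (simp add: continuous_map_atin tendsto_mult)

lemma continuous_map_of_real [continuous_intros]:
  "continuous_map X euclideanreal f \<Longrightarrow> continuous_map X euclidean (\<lambda>x. of_real (f x) :: 'b::real_normed_algebra_1)"
  by (simp add: continuous_map_atin tendsto_of_real)

lemma topspace_cube_top: "topspace (cube_top m) = PiE {..<m} (\<lambda>_. UNIV)"
  by (simp add: cube_top_def)

lemma topspace_cube_top_extensional: "x \<in> topspace (cube_top m) \<Longrightarrow> x \<in> extensional {..<m}"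
  by (simp add: topspace_cube_top PiE_def)

lemma continuous_map_cube_coord [continuous_intros]:
  "i < m \<Longrightarrow> continuous_map (cube_top m) euclidean (\<lambda>x. x i)"
  using continuous_map_product_projection[of i "{..<m}" "\<lambda>_. euclidean"] by (simp add: cube_top_def)

lemma continuous_map_into_cube_top:
  "continuous_map X (cube_top m) f \<longleftrightarrow>
     f ` topspace X \<subseteq> extensional {..<m} \<and> (\<forall>i<m. continuous_map X euclidean (\<lambda>x. f x i))"
  unfolding cube_top_def continuous_map_componentwise by auto

lemma continuous_map_gmul:
  assumes "continuous_map X (cube_top m) f" "continuous_map X (cube_top m) g"
  shows "continuous_map X (cube_top m) (\<lambda>x. gmul m (f x) (g x))"
proof -
  have "continuous_map X euclidean (\<lambda>x. f x i * g x i)" if "i < m" for i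
    using assms that by (intro continuous_map_mult) (auto simp: continuous_map_into_cube_top)
  then show ?thesis
    by (auto simp: continuous_map_into_cube_top gmul_apply cong: if_cong)
qed

lemma Gm_subset_cube: "Gm d m \<subseteq> topspace (cube_top m)"
  by (auto simp: topspace_cube_top Gm_def PiE_def)

lemma compact_Sph: "compact (Sph d)"
proof -
  have "Sph d = sphere 0 1 \<inter> {z. d = 1 \<longrightarrow> Im z = 0}"
    by (auto simp: Sph_def)
  moreover have "closed {z::complex. d = 1 \<longrightarrow> Im z = 0}"
    by (cases "d = 1") (auto intro!: closed_Collect_eq continuous_intros)
  ultimately show ?thesis
    by (simp add: compact_Int_closed)
qed

lemma compactin_Gm: "compactin (cube_top m) (Gm d m)"
  unfolding cube_top_def Gm_def by (simp add: compactin_PiE compact_Sph)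

lemma topspace_coset_top: "topspace (coset_top d m N) = cosets d m N"
  using Gm_subset_cube by (auto simp: coset_top_def cosets_def)

lemma compact_space_coset_top: "compact_space (coset_top d m N)"
  unfolding coset_top_def
  by (rule compact_space_quotient_top) (rule compact_space_subtopology[OF compactin_Gm])

lemma topspace_simplex_top: "topspace (simplex_top \<sigma>) = simplex_on \<sigma>"
  by (simp add: simplex_top_def)

lemma continuous_map_simplex_coord [continuous_intros]:
  "continuous_map (simplex_top \<sigma>) euclideanreal (\<lambda>t. t I)"
  unfolding simplex_top_def by (intro continuous_map_from_subtopology continuous_map_product_projection) simp

lemma continuous_map_radius [continuous_intros]:
  "continuous_map (simplex_top \<sigma>) euclideanreal (\<lambda>t. radius m t i)"
  unfolding radius_def by (intro continuous_map_sum finite_subsets_lessThan continuous_map_simplex_coord)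

lemma compact_space_simplex_top:
  assumes fin: "finite \<sigma>"
  shows "compact_space (simplex_top \<sigma>)"
proof -
  let ?R = "product_topology (\<lambda>_. euclideanreal) (UNIV :: nat set set)"
  have eq: "simplex_on \<sigma> = PiE UNIV (\<lambda>I. if I \<in> \<sigma> then {0..} else {0})
      \<inter> {t \<in> topspace ?R. sum t \<sigma> \<in> {1}}"
    by (auto simp: simplex_on_def PiE_def Pi_def) (metis order_refl)
  have "closedin ?R (PiE UNIV (\<lambda>I. if I \<in> \<sigma> then {0..} else {0::real}))"
    by (auto simp: closedin_product_topology)
  moreover have "continuous_map ?R euclideanreal (\<lambda>t. sum t \<sigma>)"
    by (intro continuous_map_sum fin continuous_map_product_projection) auto
  then have "closedin ?R {t \<in> topspace ?R. sum t \<sigma> \<in> {1}}"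
    by (rule closedin_continuous_map_preimage) simp
  ultimately have closed: "closedin ?R (simplex_on \<sigma>)"
    unfolding eq by (rule closedin_Int)
  have "t I \<le> 1" if t: "t \<in> simplex_on \<sigma>" for t I
  proof (cases "I \<in> \<sigma>")
    case True
    have "sum t {I} \<le> sum t \<sigma>"
      by (rule sum_mono2) (use fin True t in \<open>auto simp: simplex_on_def\<close>)
    then show ?thesis
      using t by (simp add: simplex_on_def)
  qed (use t in \<open>simp add: simplex_on_def\<close>)
  then have "simplex_on \<sigma> \<subseteq> PiE UNIV (\<lambda>_. {0..1})"
    by (auto simp: simplex_on_def)
  moreover have "compactin ?R (PiE UNIV (\<lambda>_. {0..1::real}))"
    by (simp add: compactin_PiE)
  ultimately have "compactin ?R (simplex_on \<sigma>)"
    using closed closed_compactin by blast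
  then show ?thesis
    unfolding simplex_top_def by (rule compact_space_subtopology)
qed

lemma Hausdorff_space_simplex_top: "Hausdorff_space (simplex_top \<sigma>)"
  unfolding simplex_top_def
  by (intro Hausdorff_space_subtopology) (simp add: Hausdorff_space_product_topology)

definition coord_dist :: "nat \<Rightarrow> (nat \<Rightarrow> complex) \<Rightarrow> (nat \<Rightarrow> complex) \<Rightarrow> real" where
  "coord_dist m x y = (\<Sum>i<m. cmod (x i - y i))"

lemma coord_dist_commute: "coord_dist m x y = coord_dist m y x"
  by (simp add: coord_dist_def norm_minus_commute)

lemma coord_dist_triangle: "coord_dist m x z \<le> coord_dist m x y + coord_dist m y z"
  unfolding coord_dist_def sum.distrib[symmetric]
  by (rule sum_mono) (metis diff_add_cancel add_diff_eq norm_triangle_ineq)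

lemma coord_dist_self [simp]: "coord_dist m x x = 0"
  by (simp add: coord_dist_def)

lemma coord_dist_eq_0:
  assumes "x \<in> extensional {..<m}" "y \<in> extensional {..<m}" "coord_dist m x y \<le> 0"
  shows "x = y"
proof -
  have "(\<Sum>i<m. cmod (x i - y i)) = 0"
    using assms(3) sum_nonneg[of "{..<m}" "\<lambda>i. cmod (x i - y i)"] by (simp add: coord_dist_def)
  then have "\<forall>i\<in>{..<m}. cmod (x i - y i) = 0"
    by (subst sum_nonneg_eq_0_iff[symmetric]) auto
  then show ?thesis
    using assms(1,2) by (intro extensionalityI[of _ "{..<m}"]) auto
qed

lemma coord_dist_gmul: "h \<in> Gm d m \<Longrightarrow> coord_dist m (gmul m h x) (gmul m h y) = coord_dist m x y"
  unfolding coord_dist_def gmul_apply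
  by (intro sum.cong) (auto simp: Gm_iff Sph_def norm_mult simp flip: right_diff_distrib)

lemma continuous_map_coord_dist:
  assumes "continuous_map X (cube_top m) f" "continuous_map X (cube_top m) g"
  shows "continuous_map X euclideanreal (\<lambda>x. coord_dist m (f x) (g x))"
  unfolding coord_dist_def using assms
  by (intro continuous_map_sum continuous_map_norm continuous_map_diff)
    (auto simp: continuous_map_into_cube_top)

context
  fixes d m :: nat and H P :: "(nat \<Rightarrow> complex) set"
  assumes H: "is_subgroup d m H"
    and P: "P \<subseteq> topspace (cube_top m)"
    and P_invariant: "\<And>h x. h \<in> H \<Longrightarrow> x \<in> P \<Longrightarrow> gmul m h x \<in> P"
begin

lemma continuous_map_translate_invariant:
  assumes "h \<in> H"
  shows "continuous_map (subtopology (cube_top m) P) (subtopology (cube_top m) P) (gmul m h)"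
proof -
  have "h \<in> topspace (cube_top m)"
    using assms is_subgroupD(1)[OF H] Gm_subset_cube by blast
  then have "continuous_map (subtopology (cube_top m) P) (cube_top m) (\<lambda>x. gmul m h x)"
    by (intro continuous_map_gmul continuous_map_from_subtopology continuous_map_id[unfolded id_def])
      (simp add: continuous_map_const)
  then show ?thesis
    using assms P_invariant P by (auto simp: continuous_map_in_subtopology)
qed

lemma open_map_orbit_quotient:
  "open_map (subtopology (cube_top m) P) (quotient_top (subtopology (cube_top m) P) (\<lambda>x. setmul m H {x}))
     (\<lambda>x. setmul m H {x})"
  unfolding open_map_def
proof (intro allI impI)
  let ?X = "subtopology (cube_top m) P" and ?q = "\<lambda>x. setmul m H {x}"
  fix U assume U: "openin ?X U"
  have UP: "U \<subseteq> P"
    using openin_subset[OF U] by simp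
  have ext: "x \<in> extensional {..<m}" if "x \<in> P" for x
    using that P topspace_cube_top_extensional by blast
  have HG: "h \<in> Gm d m" if "h \<in> H" for h
    using that is_subgroupD(1)[OF H] by blast
  have saturation: "{x \<in> topspace ?X. ?q x \<in> ?q ` U} = (\<Union>h\<in>H. {x \<in> topspace ?X. gmul m (ginv m h) x \<in> U})"
  proof (intro set_eqI iffI)
    fix x assume "x \<in> {x \<in> topspace ?X. ?q x \<in> ?q ` U}"
    then obtain u where x: "x \<in> P" and u: "u \<in> U" "?q x = ?q u"
      by auto
    then obtain h where h: "h \<in> H" "x = gmul m h u"
      using orbit_eq_iff[OF H ext] by blast
    then have "gmul m (ginv m h) x = u"
      using ginv_gmul_cancel_left[OF HG ext] u(1) UP by blast
    then show "x \<in> (\<Union>h\<in>H. {x \<in> topspace ?X. gmul m (ginv m h) x \<in> U})"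
      using x u h(1) P by auto
  next
    fix x assume "x \<in> (\<Union>h\<in>H. {x \<in> topspace ?X. gmul m (ginv m h) x \<in> U})"
    then obtain h where h: "h \<in> H" "x \<in> P" "gmul m (ginv m h) x \<in> U"
      by auto
    have "x = gmul m h (gmul m (ginv m h) x)"
      by (rule gmul_ginv_cancel_left[OF HG[OF h(1)] ext[OF h(2)], symmetric])
    then have "?q x = ?q (gmul m (ginv m h) x)"
      unfolding orbit_eq_iff[OF H ext[OF h(2)]] using h(1) by blast
    then show "x \<in> {x \<in> topspace ?X. ?q x \<in> ?q ` U}"
      using h P by auto
  qed
  have "openin ?X {x \<in> topspace ?X. gmul m (ginv m h) x \<in> U}" if "h \<in> H" for h
    using continuous_map_translate_invariant[OF is_subgroupD(4)[OF H that]] U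
    by (rule openin_continuous_map_preimage)
  then have "openin ?X {x \<in> topspace ?X. ?q x \<in> ?q ` U}"
    unfolding saturation by (intro openin_Union) auto
  moreover have "?q ` U \<subseteq> ?q ` topspace ?X"
    using openin_subset[OF U] by (rule image_mono)
  ultimately show "openin (quotient_top ?X ?q) (?q ` U)"
    by (simp add: openin_quotient_top)
qed

lemma orbit_gap:
  assumes H_compact: "compactin (cube_top m) H"
    and xy: "x \<in> P" "y \<in> P" "setmul m H {x} \<noteq> setmul m H {y}"
  obtains e where "0 < e" "\<And>h. h \<in> H \<Longrightarrow> 2 * e \<le> coord_dist m y (gmul m h x)"
proof -
  define \<phi> where "\<phi> h = coord_dist m y (gmul m h x)" for h
  have "continuous_map (cube_top m) euclideanreal \<phi>"
    unfolding \<phi>_def using P xy(1,2)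
    by (intro continuous_map_coord_dist continuous_map_gmul continuous_map_id[unfolded id_def])
      (auto simp: continuous_map_const)
  then have "compactin euclideanreal (\<phi> ` H)"
    by (rule image_compactin[OF H_compact])
  moreover have "\<phi> ` H \<noteq> {}"
    using is_subgroupD(2)[OF H] by auto
  ultimately obtain s where "s \<in> \<phi> ` H" "\<And>r. r \<in> \<phi> ` H \<Longrightarrow> s \<le> r"
    using compact_attains_inf[of "\<phi> ` H"] by auto
  then obtain h0 where h0: "h0 \<in> H" "\<And>h. h \<in> H \<Longrightarrow> \<phi> h0 \<le> \<phi> h"
    by blast
  have ext: "z \<in> extensional {..<m}" if "z \<in> P" for z
    using that P topspace_cube_top_extensional by blast
  have "\<phi> h0 > 0"
  proof (rule ccontr)
    assume "\<not> \<phi> h0 > 0"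
    then have "y = gmul m h0 x"
      unfolding \<phi>_def using ext xy(2) by (intro coord_dist_eq_0) auto
    then have "setmul m H {y} = setmul m H {x}"
      unfolding orbit_eq_iff[OF H ext[OF xy(2)]] using h0(1) by blast
    then show False
      using xy(3) by simp
  qed
  then show ?thesis
    using that[of "\<phi> h0 / 2"] h0(2) by (simp add: \<phi>_def)
qed

lemma Hausdorff_space_orbit_quotient:
  assumes H_compact: "compactin (cube_top m) H"
  shows "Hausdorff_space (quotient_top (subtopology (cube_top m) P) (\<lambda>x. setmul m H {x}))"
  unfolding Hausdorff_space_def
proof (intro allI impI)
  let ?X = "subtopology (cube_top m) P" and ?q = "\<lambda>x. setmul m H {x}"
  fix a b assume "a \<in> topspace (quotient_top ?X ?q) \<and> b \<in> topspace (quotient_top ?X ?q) \<and> a \<noteq> b"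
  then obtain x y where xy: "x \<in> P" "y \<in> P" "a = ?q x" "b = ?q y" "?q x \<noteq> ?q y"
    using P by auto
  obtain e where e: "0 < e" "\<And>h. h \<in> H \<Longrightarrow> 2 * e \<le> coord_dist m y (gmul m h x)"
    using orbit_gap[OF H_compact xy(1,2,5)] by blast
  have ext: "z \<in> extensional {..<m}" if "z \<in> P" for z
    using that P topspace_cube_top_extensional by blast
  have HG: "h \<in> Gm d m" if "h \<in> H" for h
    using that is_subgroupD(1)[OF H] by blast
  have dist_cont: "continuous_map ?X euclideanreal (\<lambda>z. coord_dist m z w)" if "w \<in> P" for w
    using that P
    by (intro continuous_map_coord_dist continuous_map_from_subtopology continuous_map_id[unfolded id_def])
      (auto simp: continuous_map_const)
  define U where "U = {z \<in> topspace ?X. coord_dist m z x \<in> {..<e}}"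
  define V where "V = {z \<in> topspace ?X. coord_dist m z y \<in> {..<e}}"
  have "openin ?X U" "openin ?X V"
    unfolding U_def V_def
    by (rule openin_continuous_map_preimage[OF dist_cont[OF xy(1)]], simp,
        rule openin_continuous_map_preimage[OF dist_cont[OF xy(2)]], simp)
  then have "openin (quotient_top ?X ?q) (?q ` U)" "openin (quotient_top ?X ?q) (?q ` V)"
    using open_map_orbit_quotient by (auto simp: open_map_def)
  moreover have "x \<in> U" "y \<in> V"
    using xy(1,2) e(1) P by (auto simp: U_def V_def)
  then have "a \<in> ?q ` U" "b \<in> ?q ` V"
    using xy(3,4) by blast+
  moreover have "disjnt (?q ` U) (?q ` V)"
  proof (rule ccontr)
    assume "\<not> disjnt (?q ` U) (?q ` V)"
    then obtain u v where uv: "u \<in> U" "v \<in> V" "?q v = ?q u"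
      by (auto simp: disjnt_def)
    have "v \<in> P"
      using uv(2) by (simp add: V_def)
    then obtain k where k: "k \<in> H" "v = gmul m k u"
      using orbit_eq_iff[OF H ext] uv(3) by blast
    have "coord_dist m y (gmul m k x) \<le> coord_dist m y v + coord_dist m (gmul m k u) (gmul m k x)"
      unfolding k(2) by (rule coord_dist_triangle)
    also have "\<dots> < 2 * e"
      using uv(1,2) coord_dist_gmul[OF HG[OF k(1)]] by (simp add: U_def V_def coord_dist_commute)
    finally show False
      using e(2)[OF k(1)] by simp
  qed
  ultimately show "\<exists>U V. openin (quotient_top ?X ?q) U \<and> openin (quotient_top ?X ?q) V \<and>
      a \<in> U \<and> b \<in> V \<and> disjnt U V"
    by blast
qed

end

section \<open>The comparison map\<close>

lemma polyhedral_product_iff: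
  "x \<in> polyhedral_product d m K \<longleftrightarrow> x \<in> extensional {..<m} \<and> (\<forall>i<m. x i \<in> Disk d) \<and>
     (\<exists>I\<in>K. \<forall>j<m. j \<notin> I \<longrightarrow> x j \<in> Sph d)"
  by (auto simp: polyhedral_product_def PiE_def Pi_def)

lemma polyhedral_product_subset_cube: "polyhedral_product d m K \<subseteq> topspace (cube_top m)"
  by (auto simp: polyhedral_product_iff topspace_cube_top PiE_def)

lemma gmul_in_polyhedral_product:
  assumes a: "a \<in> Gm d m" and x: "x \<in> polyhedral_product d m K"
  shows "gmul m a x \<in> polyhedral_product d m K"
proof -
  have Disk: "u \<in> Sph d \<Longrightarrow> z \<in> Disk d \<Longrightarrow> u * z \<in> Disk d" for u z
    by (auto simp: Sph_def Disk_def norm_mult)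
  from x obtain I where "I \<in> K" "\<forall>j<m. j \<notin> I \<longrightarrow> x j \<in> Sph d"
    by (auto simp: polyhedral_product_iff)
  then show ?thesis
    using a x by (auto simp: polyhedral_product_iff gmul_apply Gm_iff intro: Sph_mult Disk)
qed

lemma polar_decomposition:
  assumes "x \<in> extensional {..<m}" "\<And>i. i < m \<Longrightarrow> x i \<in> Disk d"
  obtains c where "c \<in> Gm d m" "x = (\<lambda>i\<in>{..<m}. of_real (cmod (x i)) * c i)"
proof
  define c where "c = (\<lambda>i\<in>{..<m}. if x i = 0 then 1 else x i / of_real (cmod (x i)))"
  show "c \<in> Gm d m"
    using assms(2) by (auto simp: Gm_iff c_def Sph_def Disk_def norm_divide Im_divide_of_real)
  show "x = (\<lambda>i\<in>{..<m}. of_real (cmod (x i)) * c i)"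
    using assms(1) by (auto simp: c_def fun_eq_iff extensional_def)
qed

definition polar :: "nat \<Rightarrow> (nat set \<Rightarrow> real) \<Rightarrow> (nat \<Rightarrow> complex) \<Rightarrow> nat \<Rightarrow> complex" where
  "polar m t c = (\<lambda>i\<in>{..<m}. of_real (radius m t i) * c i)"

lemma polar_extensional [simp]: "polar m t c \<in> extensional {..<m}"
  by (simp add: polar_def)

lemma polar_gmul: "polar m t (gmul m a c) = gmul m a (polar m t c)"
  by (auto simp: polar_def gmul_apply fun_eq_iff)

lemma (in chain_point) cmod_polar: "i < m \<Longrightarrow> c \<in> Gm d m \<Longrightarrow> cmod (polar m t c i) = radius m t i"
  using radius_nonneg by (simp add: polar_def norm_mult Gm_iff Sph_def)

lemma (in chain_point) polar_in_polyhedral_product: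
  assumes "\<sigma> \<subseteq> K" and c: "c \<in> Gm d m"
  shows "polar m t c \<in> polyhedral_product d m K"
proof -
  have "\<Union>\<sigma> \<in> K"
    using Union_in_subchain[of \<sigma>] chain assms(1) by (auto simp: chains_def)
  moreover have "polar m t c i \<in> Disk d" if "i < m" for i
    using cmod_polar[OF that c] radius_le_1 c that by (auto simp: Disk_def polar_def Gm_iff Sph_def)
  moreover have "polar m t c j \<in> Sph d" if "j < m" "j \<notin> \<Union>\<sigma>" for j
    using radius_eq_1[OF that(2)] c that(1) by (simp add: polar_def Gm_iff)
  ultimately show ?thesis
    unfolding polyhedral_product_iff by (intro conjI polar_extensional bexI[of _ "\<Union>\<sigma>"]) auto
qed

lemma continuous_map_polar:
  "continuous_map (prod_topology (simplex_top \<sigma>) (subtopology (cube_top m) G)) (cube_top m)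
     (\<lambda>(t, c). polar m t c)"
  unfolding continuous_map_into_cube_top
proof (intro conjI allI impI)
  fix i assume "i < m"
  then have "continuous_map (prod_topology (simplex_top \<sigma>) (subtopology (cube_top m) G)) euclidean
      (\<lambda>p. of_real (radius m (fst p) i) * snd p i)"
    by (intro continuous_map_mult continuous_map_of_real continuous_map_compose[OF continuous_map_fst,
          unfolded o_def] continuous_map_compose[OF continuous_map_snd, unfolded o_def]
        continuous_map_radius continuous_map_from_subtopology continuous_map_cube_coord)
  then show "continuous_map (prod_topology (simplex_top \<sigma>) (subtopology (cube_top m) G)) euclidean
      (\<lambda>p. (case p of (t, c) \<Rightarrow> polar m t c) i)"
    using \<open>i < m\<close> by (simp add: polar_def case_prod_unfold)
qed (auto simp: polar_def)

locale polyhedral_orbit_space =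
  fixes d m :: nat and K :: "nat set set" and H :: "(nat \<Rightarrow> complex) set"
  assumes complex: "simp_complex_on m K" and closed_H: "closed_subgroup d m H"
begin

abbreviation P where "P \<equiv> polyhedral_product d m K"
abbreviation orbit where "orbit x \<equiv> setmul m H {x}"
abbreviation N where "N \<equiv> NI d m H"

lemma subgroup_H: "is_subgroup d m H"
  using closed_H by (simp add: closed_subgroup_def)

lemma H_subset_Gm: "H \<subseteq> Gm d m"
  using is_subgroupD(1)[OF subgroup_H] .

lemma compactin_H: "compactin (cube_top m) H"
  using closed_H closed_compactin[OF compactin_Gm H_subset_Gm] by (simp add: closed_subgroup_def)

lemma finite_chains: "finite (chains K)"
proof -
  have "finite K"
    using complex finite_subset[of K "Pow {..<m}"] by (simp add: simp_complex_on_def)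
  moreover have "chains K \<subseteq> Pow K"
    by (auto simp: chains_def)
  ultimately show ?thesis
    by (simp add: finite_subset)
qed

lemma finite_chain: "\<sigma> \<in> chains K \<Longrightarrow> finite \<sigma>"
  using complex finite_subset[of \<sigma> K] finite_subset[of K "Pow {..<m}"]
  by (auto simp: chains_def simp_complex_on_def)

lemma chain_point: "\<sigma> \<in> chains K \<Longrightarrow> t \<in> simplex_on \<sigma> \<Longrightarrow> chain_point m \<sigma> t"
  using complex chains_mono[of K "Pow {..<m}"] by unfold_locales (auto simp: simp_complex_on_def)

lemma chain_subset: "\<sigma> \<in> chains K \<Longrightarrow> \<sigma> \<subseteq> K"
  by (simp add: chains_def)

lemma topspace_orbit_space: "topspace (orbit_space d m K H) = orbit ` P"
  using polyhedral_product_subset_cube[of d m K] by (simp add: orbit_space_def Int_absorb1)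

text \<open>On the support face the radii vanish, so the phases there only matter modulo \<open>G\<^sup>I\<close>.\<close>
lemma orbit_polar_eq_if_coset:
  assumes \<sigma>: "\<sigma> \<in> chains K" "t \<in> simplex_on \<sigma>"
    and c': "c' \<in> setmul m {c} (N (support_face \<sigma> t))"
  shows "orbit (polar m t c') = orbit (polar m t c)"
proof -
  interpret chain_point m \<sigma> t
    by (rule chain_point[OF \<sigma>])
  obtain a h where a: "a \<in> GI d m (support_face \<sigma> t)" and h: "h \<in> H" and c': "c' = gmul m c (gmul m a h)"
    using c' by (auto simp: NI_eq_setmul[OF subgroup_H] setmul_iff)
  have "polar m t c' i = gmul m h (polar m t c) i" for i
  proof (cases "i < m \<and> i \<notin> support_face \<sigma> t")
    case True
    then show ?thesis
      using a c' by (simp add: polar_def gmul_apply GI_def)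
  next
    case False
    then show ?thesis
      using radius_eq_0_iff[of i] by (auto simp: polar_def gmul_apply)
  qed
  then show ?thesis
    using orbit_eq_iff[OF subgroup_H polar_extensional] h by blast
qed

definition hocolim_point :: "nat set set \<Rightarrow> (nat set \<Rightarrow> real) \<Rightarrow> (nat \<Rightarrow> complex)
    \<Rightarrow> (nat set \<Rightarrow> real) \<times> (nat \<Rightarrow> complex) set" where
  "hocolim_point \<sigma> t c = (t, setmul m {c} (N (support_face \<sigma> t)))"

text \<open>By \<open>orbit_polar_eq_if_coset\<close> the choice of representative does not matter.\<close>
definition hocolim_to_orbit :: "(nat set \<Rightarrow> real) \<times> (nat \<Rightarrow> complex) set \<Rightarrow> (nat \<Rightarrow> complex) set" where
  "hocolim_to_orbit p = orbit (polar m (fst p) (SOME c. c \<in> snd p))"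

lemma hocolim_to_orbit_point:
  assumes "\<sigma> \<in> chains K" "t \<in> simplex_on \<sigma>" "c \<in> Gm d m"
  shows "hocolim_to_orbit (hocolim_point \<sigma> t c) = orbit (polar m t c)"
proof -
  have "c \<in> setmul m {c} (N (support_face \<sigma> t))"
    using assms(3) by (intro mem_coset_self is_subgroupD(2)[OF NI_is_subgroup[OF subgroup_H]]) (simp add: Gm_iff)
  then have "(SOME c'. c' \<in> setmul m {c} (N (support_face \<sigma> t))) \<in> setmul m {c} (N (support_face \<sigma> t))"
    by (rule someI[of "\<lambda>c'. c' \<in> setmul m {c} (N (support_face \<sigma> t))"])
  then show ?thesis
    unfolding hocolim_to_orbit_def hocolim_point_def using orbit_polar_eq_if_coset[OF assms(1,2)] by simp
qed

lemma hocolim_proj_coset: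
  assumes "\<sigma> \<in> chains K" "t \<in> simplex_on \<sigma>" "c \<in> Gm d m"
  shows "hocolim_proj d m H (\<sigma>, t, setmul m {c} (N (\<Inter>\<sigma>))) = hocolim_point \<sigma> t c"
proof -
  have "N (\<Inter>\<sigma>) \<subseteq> N (support_face \<sigma> t)"
    by (rule NI_mono[OF subgroup_H]) auto
  moreover have "N (\<Inter>\<sigma>) \<noteq> {}"
    using is_subgroupD(2)[OF NI_is_subgroup[OF subgroup_H]] by blast
  ultimately have "setmul m (setmul m {c} (N (\<Inter>\<sigma>))) (N (support_face \<sigma> t)) = setmul m {c} (N (support_face \<sigma> t))"
    using setmul_subgroup_absorb[OF NI_is_subgroup[OF subgroup_H]] by (simp add: setmul_assoc)
  then show ?thesis
    by (simp add: hocolim_proj_def hocolim_point_def)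
qed

lemma topspace_hocolim:
  "p \<in> topspace (hocolim d m K H) \<longleftrightarrow>
     (\<exists>\<sigma> t c. \<sigma> \<in> chains K \<and> t \<in> simplex_on \<sigma> \<and> c \<in> Gm d m \<and> p = hocolim_point \<sigma> t c)"
    (is "_ \<longleftrightarrow> ?rhs")
proof -
  have cells: "topspace (hocolim_cells d m K H) =
      Sigma (chains K) (\<lambda>\<sigma>. simplex_on \<sigma> \<times> (\<lambda>c. setmul m {c} (N (\<Inter>\<sigma>))) ` Gm d m)"
    by (auto simp: hocolim_cells_def topspace_simplex_top topspace_coset_top cosets_def)
  show ?thesis
  proof
    assume "p \<in> topspace (hocolim d m K H)"
    then obtain \<sigma> t c where "\<sigma> \<in> chains K" "t \<in> simplex_on \<sigma>" "c \<in> Gm d m"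
        "p = hocolim_proj d m H (\<sigma>, t, setmul m {c} (N (\<Inter>\<sigma>)))"
      unfolding hocolim_def topspace_quotient_top cells by blast
    then show ?rhs
      using hocolim_proj_coset by metis
  next
    assume ?rhs
    then obtain \<sigma> t c where x: "\<sigma> \<in> chains K" "t \<in> simplex_on \<sigma>" "c \<in> Gm d m" "p = hocolim_point \<sigma> t c"
      by blast
    then have "(\<sigma>, t, setmul m {c} (N (\<Inter>\<sigma>))) \<in> topspace (hocolim_cells d m K H)"
      unfolding cells by blast
    then show "p \<in> topspace (hocolim d m K H)"
      unfolding hocolim_def topspace_quotient_top using hocolim_proj_coset[OF x(1-3)] x(4) by (metis image_eqI)
  qed
qed

lemma continuous_map_hocolim_to_orbit:
  "continuous_map (hocolim d m K H) (orbit_space d m K H) hocolim_to_orbit"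
  unfolding hocolim_def hocolim_cells_def
proof (intro continuous_map_from_quotient_top continuous_map_from_sum_topology)
  fix \<sigma> assume \<sigma>: "\<sigma> \<in> chains K"
  let ?Q = "\<lambda>(t, c). (t, setmul m {c} (N (\<Inter>\<sigma>)))"
  let ?Z = "prod_topology (simplex_top \<sigma>) (subtopology (cube_top m) (Gm d m))"
  have fin: "finite \<sigma>"
    using finite_chain[OF \<sigma>] .
  show "continuous_map (prod_topology (simplex_top \<sigma>) (coset_top d m (N (\<Inter>\<sigma>)))) (orbit_space d m K H)
      (\<lambda>x. (hocolim_to_orbit \<circ> hocolim_proj d m H) (\<sigma>, x))"
  proof (rule continuous_compose_quotient_map)
    show "quotient_map ?Z (prod_topology (simplex_top \<sigma>) (coset_top d m (N (\<Inter>\<sigma>)))) ?Q"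
      unfolding coset_top_def
      by (rule quotient_map_prod_right[OF compact_imp_locally_compact_space[OF compact_space_simplex_top[OF fin]]
            disjI1[OF Hausdorff_space_simplex_top] quotient_map_quotient_top])
    have "continuous_map ?Z (subtopology (cube_top m) P) (\<lambda>(t, c). polar m t c)"
      using continuous_map_polar chain_point.polar_in_polyhedral_product[OF chain_point[OF \<sigma>] chain_subset[OF \<sigma>]]
      by (auto simp: continuous_map_in_subtopology topspace_simplex_top)
    then have "continuous_map ?Z (orbit_space d m K H) (orbit \<circ> (\<lambda>(t, c). polar m t c))"
      unfolding orbit_space_def by (rule continuous_map_compose[OF _ continuous_map_quotient_top])
    then show "continuous_map ?Z (orbit_space d m K H) ((\<lambda>x. (hocolim_to_orbit \<circ> hocolim_proj d m H) (\<sigma>, x)) \<circ> ?Q)"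
      by (rule continuous_map_eq)
        (auto simp: topspace_simplex_top hocolim_proj_coset[OF \<sigma>] hocolim_to_orbit_point[OF \<sigma>])
  qed
qed

lemma compact_space_hocolim: "compact_space (hocolim d m K H)"
  unfolding hocolim_def hocolim_cells_def
proof (intro compact_space_quotient_top compact_space_sum_topology[OF finite_chains])
  fix \<sigma> assume "\<sigma> \<in> chains K"
  then have "finite \<sigma>"
    by (rule finite_chain)
  then show "compact_space (prod_topology (simplex_top \<sigma>) (coset_top d m (N (\<Inter>\<sigma>))))"
    by (simp add: compact_space_prod_topology compact_space_simplex_top compact_space_coset_top)
qed

lemma Hausdorff_space_orbit_space: "Hausdorff_space (orbit_space d m K H)"
  unfolding orbit_space_def
  by (rule Hausdorff_space_orbit_quotient[OF subgroup_H polyhedral_product_subset_cube _ compactin_H])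
    (use gmul_in_polyhedral_product H_subset_Gm in blast)

end

context polyhedral_orbit_space
begin

lemma weights_eq_if_orbit_polar_eq:
  assumes \<sigma>1: "\<sigma>1 \<in> chains K" "t1 \<in> simplex_on \<sigma>1" "c1 \<in> Gm d m"
    and \<sigma>2: "\<sigma>2 \<in> chains K" "t2 \<in> simplex_on \<sigma>2" "c2 \<in> Gm d m"
    and eq: "orbit (polar m t2 c2) = orbit (polar m t1 c1)"
  shows "t1 = t2"
proof (rule radius_inj[OF chain_point[OF \<sigma>1(1,2)] chain_point[OF \<sigma>2(1,2)]])
  obtain h where h: "h \<in> H" "polar m t2 c2 = gmul m h (polar m t1 c1)"
    using eq orbit_eq_iff[OF subgroup_H polar_extensional] by blast
  fix i assume i: "i < m"
  have "radius m t2 i = cmod (polar m t2 c2 i)"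
    using chain_point.cmod_polar[OF chain_point[OF \<sigma>2(1,2)] i \<sigma>2(3)] by simp
  also have "\<dots> = cmod (h i) * cmod (polar m t1 c1 i)"
    using h(2) i by (simp add: gmul_apply norm_mult)
  also have "\<dots> = radius m t1 i"
    using chain_point.cmod_polar[OF chain_point[OF \<sigma>1(1,2)] i \<sigma>1(3)] h(1) H_subset_Gm i
    by (auto simp: Gm_iff Sph_def)
  finally show "radius m t1 i = radius m t2 i" ..
qed

lemma coset_eq_if_orbit_polar_eq:
  assumes \<sigma>: "\<sigma> \<in> chains K" "t \<in> simplex_on \<sigma>" and c: "c1 \<in> Gm d m" "c2 \<in> Gm d m"
    and eq: "orbit (polar m t c2) = orbit (polar m t c1)"
  shows "setmul m {c2} (N (support_face \<sigma> t)) = setmul m {c1} (N (support_face \<sigma> t))"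
proof -
  interpret chain_point m \<sigma> t
    by (rule chain_point[OF \<sigma>])
  let ?S = "support_face \<sigma> t"
  obtain h where h: "h \<in> H" "polar m t c2 = gmul m h (polar m t c1)"
    using eq orbit_eq_iff[OF subgroup_H polar_extensional] by blast
  have hG: "h \<in> Gm d m"
    using h(1) H_subset_Gm by blast
  define a where "a = gmul m c2 (ginv m (gmul m c1 h))"
  have nonzero: "c1 i \<noteq> 0" "h i \<noteq> 0" if "i < m" for i
    using c(1) hG that by (auto simp: Gm_iff Sph_nonzero)
  text \<open>Off the support face the radii are positive, so there the phases agree up to \<open>h\<close>.\<close>
  have "a \<in> GI d m ?S"
  proof -
    have "a j = 1" if j: "j < m" "j \<notin> ?S" for j
    proof -
      have "of_real (radius m t j) * c2 j = h j * (of_real (radius m t j) * c1 j)"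
        using fun_cong[OF h(2), of j] j(1) by (simp add: polar_def gmul_apply)
      moreover have "radius m t j \<noteq> 0"
        using radius_eq_0_iff[of j] j(2) by blast
      ultimately have "c2 j = h j * c1 j"
        by (simp add: mult.left_commute)
      then show ?thesis
        using nonzero[OF j(1)] j(1) by (simp add: a_def gmul_apply ginv_def field_simps)
    qed
    moreover have "a \<in> Gm d m"
      unfolding a_def using c hG by (intro gmul_in_Gm ginv_in_Gm) auto
    ultimately show ?thesis
      by (simp add: GI_def)
  qed
  then have "gmul m a h \<in> N ?S"
    using h(1) by (simp add: NI_eq_setmul[OF subgroup_H] setmulI)
  moreover have "c2 = gmul m c1 (gmul m a h)"
    using c(2) nonzero by (auto simp: a_def gmul_apply ginv_def fun_eq_iff Gm_iff extensional_def)
  ultimately have "c2 \<in> setmul m {c1} (N ?S)"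
    by (metis setmulI singletonI)
  then show ?thesis
    by (rule coset_eq_if_mem[OF NI_is_subgroup[OF subgroup_H]])
qed

lemma inj_on_hocolim_to_orbit: "inj_on hocolim_to_orbit (topspace (hocolim d m K H))"
proof (rule inj_onI)
  fix p1 p2
  assume "p1 \<in> topspace (hocolim d m K H)" "p2 \<in> topspace (hocolim d m K H)"
    and eq: "hocolim_to_orbit p1 = hocolim_to_orbit p2"
  then obtain \<sigma>1 t1 c1 \<sigma>2 t2 c2 where
      p1: "\<sigma>1 \<in> chains K" "t1 \<in> simplex_on \<sigma>1" "c1 \<in> Gm d m" "p1 = hocolim_point \<sigma>1 t1 c1" and
      p2: "\<sigma>2 \<in> chains K" "t2 \<in> simplex_on \<sigma>2" "c2 \<in> Gm d m" "p2 = hocolim_point \<sigma>2 t2 c2"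
    unfolding topspace_hocolim by blast
  have orbits: "orbit (polar m t2 c2) = orbit (polar m t1 c1)"
    using eq hocolim_to_orbit_point[OF p1(1-3)] hocolim_to_orbit_point[OF p2(1-3)] p1(4) p2(4) by simp
  have t: "t1 = t2"
    by (rule weights_eq_if_orbit_polar_eq[OF p1(1-3) p2(1-3) orbits])
  have "{I \<in> \<sigma>2. t2 I \<noteq> 0} = {I \<in> \<sigma>1. t1 I \<noteq> 0}"
    using chain_point.weight_outside[OF chain_point[OF p1(1,2)]]
      chain_point.weight_outside[OF chain_point[OF p2(1,2)]]
    unfolding t by blast
  moreover have "setmul m {c2} (N (support_face \<sigma>1 t1)) = setmul m {c1} (N (support_face \<sigma>1 t1))"
    using coset_eq_if_orbit_polar_eq[OF p1(1,2,3) p2(3)] orbits t by simp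
  ultimately show "p1 = p2"
    using p1(4) p2(4) t by (simp add: hocolim_point_def)
qed

lemma hocolim_to_orbit_surj: "hocolim_to_orbit ` topspace (hocolim d m K H) = topspace (orbit_space d m K H)"
proof
  show "hocolim_to_orbit ` topspace (hocolim d m K H) \<subseteq> topspace (orbit_space d m K H)"
  proof
    fix y assume "y \<in> hocolim_to_orbit ` topspace (hocolim d m K H)"
    then obtain p where "p \<in> topspace (hocolim d m K H)" "y = hocolim_to_orbit p"
      by blast
    then obtain \<sigma> t c where p: "\<sigma> \<in> chains K" "t \<in> simplex_on \<sigma>" "c \<in> Gm d m"
      and y: "y = hocolim_to_orbit (hocolim_point \<sigma> t c)"
      unfolding topspace_hocolim by blast
    have "polar m t c \<in> P"
      using chain_point.polar_in_polyhedral_product[OF chain_point[OF p(1,2)] chain_subset[OF p(1)] p(3)] .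
    then show "y \<in> topspace (orbit_space d m K H)"
      using y hocolim_to_orbit_point[OF p] by (simp add: topspace_orbit_space)
  qed
next
  show "topspace (orbit_space d m K H) \<subseteq> hocolim_to_orbit ` topspace (hocolim d m K H)"
  proof
    fix y assume "y \<in> topspace (orbit_space d m K H)"
    then obtain x where x: "x \<in> P" "y = orbit x"
      by (auto simp: topspace_orbit_space)
    then obtain I where I: "I \<in> K" "\<forall>j<m. j \<notin> I \<longrightarrow> x j \<in> Sph d"
      by (auto simp: polyhedral_product_iff)
    have ext: "x \<in> extensional {..<m}" and Disk: "\<And>i. i < m \<Longrightarrow> x i \<in> Disk d"
      using x(1) by (simp_all add: polyhedral_product_iff)
    then obtain c where c: "c \<in> Gm d m" "x = (\<lambda>i\<in>{..<m}. of_real (cmod (x i)) * c i)"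
      by (rule polar_decomposition)
    have "0 \<le> cmod (x i) \<and> cmod (x i) \<le> 1" if "i < m" for i
      using Disk[OF that] by (simp add: Disk_def)
    then obtain \<sigma> t where \<sigma>: "\<sigma> \<in> chains (Pow {i. i < m \<and> cmod (x i) < 1})" and t: "t \<in> simplex_on \<sigma>"
      and radius: "\<And>i. i < m \<Longrightarrow> radius m t i = cmod (x i)"
      using exists_chain_point_radius[where m=m and r="\<lambda>i. cmod (x i)"] by blast
    have "{i. i < m \<and> cmod (x i) < 1} \<subseteq> I"
      using I(2) by (auto simp: Sph_def)
    then have "Pow {i. i < m \<and> cmod (x i) < 1} \<subseteq> K"
      using complex I(1) by (auto simp: simp_complex_on_def)
    then have \<sigma>K: "\<sigma> \<in> chains K"
      using \<sigma> chains_mono by blast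
    have "polar m t c = x"
      by (subst c(2)) (auto simp: polar_def radius)
    then have "hocolim_to_orbit (hocolim_point \<sigma> t c) = y"
      using hocolim_to_orbit_point[OF \<sigma>K t c(1)] x(2) by simp
    moreover have "hocolim_point \<sigma> t c \<in> topspace (hocolim d m K H)"
      using \<sigma>K t c(1) topspace_hocolim by blast
    ultimately show "y \<in> hocolim_to_orbit ` topspace (hocolim d m K H)"
      by blast
  qed
qed

lemma homeomorphic_map_hocolim_to_orbit:
  "homeomorphic_map (hocolim d m K H) (orbit_space d m K H) hocolim_to_orbit"
  using continuous_map_hocolim_to_orbit
    continuous_imp_closed_map[OF continuous_map_hocolim_to_orbit compact_space_hocolim Hausdorff_space_orbit_space]
    hocolim_to_orbit_surj inj_on_hocolim_to_orbit
  by (rule bijective_closed_imp_homeomorphic_map)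

lemma Lact_orbit: "Lact m (setmul m {a} H) (orbit x) = orbit (gmul m a x)"
proof -
  have "setmul m (setmul m {a} H) (setmul m {x} H) = setmul m {gmul m a x} H"
    using is_subgroupD(2)[OF subgroup_H] by (intro setmul_coset_coset[OF subgroup_H]) auto
  then show ?thesis
    by (simp add: Lact_def setmul_commute[of m H])
qed

lemma hocolim_act_point:
  "hocolim_act m (setmul m {a} H) (hocolim_point \<sigma> t c) = hocolim_point \<sigma> t (gmul m a c)"
proof -
  have "setmul m (setmul m {a} H) (setmul m {c} (N I)) = setmul m {gmul m a c} (N I)" for I
    using is_subgroupD(2)[OF subgroup_H]
    by (intro setmul_coset_coset[OF NI_is_subgroup[OF subgroup_H] subgroup_subset_NI[OF subgroup_H]]) auto
  then show ?thesis
    by (simp add: hocolim_act_def hocolim_point_def Lact_def)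
qed

lemma equivariant_hocolim_to_orbit:
  "equivariant (cosets d m H) (hocolim_act m) (Lact m) (hocolim d m K H) hocolim_to_orbit"
  unfolding equivariant_def
proof (intro ballI)
  fix l p assume "l \<in> cosets d m H" "p \<in> topspace (hocolim d m K H)"
  then obtain a \<sigma> t c where a: "a \<in> Gm d m" "l = setmul m {a} H"
    and p: "\<sigma> \<in> chains K" "t \<in> simplex_on \<sigma>" "c \<in> Gm d m" "p = hocolim_point \<sigma> t c"
    unfolding cosets_def topspace_hocolim by blast
  show "hocolim_to_orbit (hocolim_act m l p) = Lact m l (hocolim_to_orbit p)"
    using hocolim_to_orbit_point[OF p(1,2) gmul_in_Gm[OF a(1) p(3)]] hocolim_to_orbit_point[OF p(1-3)]
    by (simp add: a(2) p(4) hocolim_act_point Lact_orbit polar_gmul)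
qed

lemma Lact_in_orbit_space:
  assumes "l \<in> cosets d m H" "y \<in> topspace (orbit_space d m K H)"
  shows "Lact m l y \<in> topspace (orbit_space d m K H)"
proof -
  obtain a x where "a \<in> Gm d m" "l = setmul m {a} H" "x \<in> P" "y = orbit x"
    using assms unfolding cosets_def topspace_orbit_space by blast
  then show ?thesis
    using gmul_in_polyhedral_product by (simp add: Lact_orbit topspace_orbit_space)
qed

lemma hocolim_act_in_hocolim:
  assumes "l \<in> cosets d m H" "p \<in> topspace (hocolim d m K H)"
  shows "hocolim_act m l p \<in> topspace (hocolim d m K H)"
proof -
  obtain a \<sigma> t c where "a \<in> Gm d m" "l = setmul m {a} H"
    and p: "\<sigma> \<in> chains K" "t \<in> simplex_on \<sigma>" "c \<in> Gm d m" "p = hocolim_point \<sigma> t c"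
    using assms unfolding cosets_def topspace_hocolim by blast
  then show ?thesis
    unfolding topspace_hocolim using gmul_in_Gm hocolim_act_point by blast
qed

end

theorem theorem3p3:
  fixes d m :: nat and K :: "nat set set" and H :: "(nat \<Rightarrow> complex) set"
  assumes "d \<in> {1, 2}"
    and "simp_complex_on m K"
    and "closed_subgroup d m H"
  shows "equivariant_homotopy_equivalent (cosets d m H)
           (orbit_space d m K H) (Lact m)
           (hocolim d m K H) (hocolim_act m)"
proof -
  interpret polyhedral_orbit_space d m K H
    using assms(2,3) by unfold_locales
  show ?thesis
    using homeomorphic_map_hocolim_to_orbit equivariant_hocolim_to_orbit
      Lact_in_orbit_space hocolim_act_in_hocolim
    by (rule equivariant_homotopy_equivalent_if_homeomorphic_map)
qed

end
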